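(* Let $\rho:\Gamma\to GL_d(\mathbb{C})$ be an irreducible representation of dimension $d\le4$, and assume the eigenvalues of $\rho(T)$ (with multiplicity) are $\mathbf{e}(r_1),\dots,\mathbf{e}(r_d)$ for real numbers $r_1,\dots,r_d$. Then $12(r_1+\cdots+r_d)$ is an integer divisible by $d$.
   Context: $\Gamma=SL(2,\mathbb{Z})$, $T=\begin{pmatrix}1&1\\0&1\end{pmatrix}$, $\mathbf{e}(r)=e^{2\pi ir}$. *)

theory Defs
  imports Complex_Main "Jordan_Normal_Form.Char_Poly"
begin

definition SL2Z :: "int mat set" where
  "SL2Z = {A. A \<in> carrier_mat 2 2 \<and> det A = 1}"

definition T_mat :: "int mat" where
  "T_mat = mat_of_rows_list 2 [[1, 1], [0, 1]]"

definition e :: "real \<Rightarrow> complex" where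
  "e r = exp (2 * of_real pi * \<i> * of_real r)"

definition is_rep :: "nat \<Rightarrow> (int mat \<Rightarrow> complex mat) \<Rightarrow> bool" where
  "is_rep d \<rho> \<longleftrightarrow>
     (\<forall>A\<in>SL2Z. \<rho> A \<in> carrier_mat d d \<and> invertible_mat (\<rho> A)) \<and>
     (\<forall>A\<in>SL2Z. \<forall>B\<in>SL2Z. \<rho> (A * B) = \<rho> A * \<rho> B)"

definition is_subspace :: "nat \<Rightarrow> complex vec set \<Rightarrow> bool" where
  "is_subspace d W \<longleftrightarrow> W \<subseteq> carrier_vec d \<and> 0\<^sub>v d \<in> W \<and>
     (\<forall>v\<in>W. \<forall>w\<in>W. v + w \<in> W) \<and> (\<forall>c. \<forall>v\<in>W. c \<cdot>\<^sub>v v \<in> W)"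

definition irreducible_rep :: "nat \<Rightarrow> (int mat \<Rightarrow> complex mat) \<Rightarrow> bool" where
  "irreducible_rep d \<rho> \<longleftrightarrow> is_rep d \<rho> \<and> d > 0 \<and>
     (\<forall>W. is_subspace d W \<and> (\<forall>A\<in>SL2Z. \<forall>w\<in>W. \<rho> A *\<^sub>v w \<in> W)
          \<longrightarrow> W = {0\<^sub>v d} \<or> W = carrier_vec d)"

end

theory Submission
  imports Defs "Jordan_Normal_Form.Jordan_Normal_Form_Uniqueness" "Jordan_Normal_Form.Spectral_Radius"
begin

text \<open>By Schur's lemma the central element \<open>-1\<close> acts as a scalar \<open>\<epsilon>\<close> with \<open>\<epsilon>\<^sup>2 = 1\<close>.
  Since \<open>S\<^sup>2 = R\<^sup>3 = -1\<close> and \<open>T = S\<^sup>3 R\<close>, this gives \<open>det (\<rho> S)\<^sup>2 = det (\<rho> R)\<^sup>3 = \<epsilon>\<^sup>d\<close> and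
  \<open>det (\<rho> T) = det (\<rho> S)\<^sup>3 det (\<rho> R)\<close>, which settles \<open>d \<le> 2\<close>. Both \<open>\<rho> S\<close> and \<open>\<rho> R\<close> are
  diagonalisable, and a common eigenvector would span an invariant line; hence for \<open>d \<ge> 2\<close> an
  eigenspace of \<open>\<rho> S\<close> and one of \<open>\<rho> R\<close> have dimensions adding up to at most \<open>d\<close>. For \<open>d = 3\<close>
  this forces the three cube roots of \<open>\<epsilon>\<close> to be simple eigenvalues of \<open>\<rho> R\<close>, so \<open>det (\<rho> R) = \<epsilon>\<close>;
  for \<open>d = 4\<close> it forces both square roots of \<open>\<epsilon>\<close> to be double eigenvalues of \<open>\<rho> S\<close>, so
  \<open>det (\<rho> S) = 1\<close>. In all cases \<open>det (\<rho> T)\<^bsup>12/d\<^esup> = 1\<close>, while \<open>det (\<rho> T) = e (r\<^sub>1 + \<dots> + r\<^sub>d)\<close>.\<close>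

section \<open>Generators and relations of \<open>SL(2,\<int>)\<close>\<close>

definition mat2 :: "'a::zero \<Rightarrow> 'a \<Rightarrow> 'a \<Rightarrow> 'a \<Rightarrow> 'a mat" where
  "mat2 a b c d = mat 2 2 (\<lambda>(i, j). if i = 0 then (if j = 0 then a else b) else (if j = 0 then c else d))"

lemma mat2_carrier [simp]: "mat2 a b c d \<in> carrier_mat 2 2"
  by (simp add: mat2_def)

lemma index_mat2 [simp]:
  "mat2 a b c d $$ (0, 0) = a" "mat2 a b c d $$ (0, 1) = b"
  "mat2 a b c d $$ (1, 0) = c" "mat2 a b c d $$ (1, 1) = d"
  "dim_row (mat2 a b c d) = 2" "dim_col (mat2 a b c d) = 2"
  by (simp_all add: mat2_def)

lemma less_2_cases: "(i::nat) < 2 \<longleftrightarrow> i = 0 \<or> i = 1"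
  by auto

lemma mat2_mult [simp]:
  "(mat2 a b c d :: 'a::comm_ring_1 mat) * mat2 a' b' c' d' =
     mat2 (a * a' + b * c') (a * b' + b * d') (c * a' + d * c') (c * b' + d * d')"
  by (rule eq_matI) (auto simp: mat2_def scalar_prod_def less_2_cases lessThan_nat_numeral atLeast0LessThan)

lemma det_mat2: "det (mat2 a b c d :: 'a::comm_ring_1 mat) = a * d - b * c"
  by (subst laplace_expansion_column[of _ 2 0])
     (auto simp: cofactor_def mat_delete_def lessThan_nat_numeral det_single mat2_def)

lemma mat2_entries: "A \<in> carrier_mat 2 2 \<Longrightarrow> A = mat2 (A $$ (0, 0)) (A $$ (0, 1)) (A $$ (1, 0)) (A $$ (1, 1))"
  by (rule eq_matI) (auto simp: mat2_def less_2_cases)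

lemma T_mat_eq: "T_mat = mat2 1 1 0 1"
  by (rule eq_matI) (auto simp: mat2_def T_mat_def mat_of_rows_list_def less_2_cases)

lemma mat2_in_SL2Z [intro]: "a * d - b * c = 1 \<Longrightarrow> (mat2 a b c d :: int mat) \<in> SL2Z"
  by (simp add: SL2Z_def det_mat2)

lemma SL2Z_cases:
  assumes "A \<in> SL2Z"
  obtains a b c d where "A = mat2 a b c d" "a * d - b * c = 1"
proof -
  have A: "A \<in> carrier_mat 2 2" "det A = 1"
    using assms by (auto simp: SL2Z_def)
  show thesis
    using that[OF mat2_entries[OF A(1)]] A(2) det_mat2 mat2_entries[OF A(1)] by metis
qed

lemma SL2Z_mult: "A \<in> SL2Z \<Longrightarrow> B \<in> SL2Z \<Longrightarrow> A * B \<in> SL2Z"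
  by (auto simp: SL2Z_def det_mult)

definition S_mat :: "int mat" where "S_mat = mat2 0 (-1) 1 0"
definition R_mat :: "int mat" where "R_mat = mat2 0 (-1) 1 1"
definition minus_one_mat :: "int mat" where "minus_one_mat = mat2 (-1) 0 0 (-1)"

lemma generators_in_SL2Z [simp]:
  "S_mat \<in> SL2Z" "R_mat \<in> SL2Z" "minus_one_mat \<in> SL2Z" "T_mat \<in> SL2Z" "mat2 1 0 0 1 \<in> SL2Z"
  by (auto simp: S_mat_def R_mat_def minus_one_mat_def T_mat_eq)

lemma SL2Z_relations:
  "S_mat * S_mat = minus_one_mat" "R_mat * R_mat * R_mat = minus_one_mat"
  "minus_one_mat * minus_one_mat = mat2 1 0 0 1" "T_mat = S_mat * S_mat * S_mat * R_mat"
  by (simp_all add: S_mat_def R_mat_def minus_one_mat_def T_mat_eq)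

lemma minus_one_mat_central: "A \<in> SL2Z \<Longrightarrow> minus_one_mat * A = A * minus_one_mat"
  by (elim SL2Z_cases) (simp add: minus_one_mat_def)

context
  fixes P :: "int mat \<Rightarrow> bool"
  assumes mult: "\<And>g h. g \<in> SL2Z \<Longrightarrow> h \<in> SL2Z \<Longrightarrow> P g \<Longrightarrow> P h \<Longrightarrow> P (g * h)"
    and S: "P S_mat" and R: "P R_mat"
begin

private lemma mult_mat2:
  "P (mat2 a b c d) \<Longrightarrow> P (mat2 a' b' c' d') \<Longrightarrow> a * d - b * c = 1 \<Longrightarrow> a' * d' - b' * c' = 1 \<Longrightarrow>
   P (mat2 (a * a' + b * c') (a * b' + b * d') (c * a' + d * c') (c * b' + d * d'))"
  using mult[OF mat2_in_SL2Z mat2_in_SL2Z] by fastforce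

private lemma special_elements:
  "P (mat2 0 1 (-1) 0)" "P (mat2 1 n 0 1)" "P (mat2 (-1) n 0 (-1))"
proof -
  have S: "P (mat2 0 (-1) 1 0)" and R: "P (mat2 0 (-1) 1 1)"
    using S R by (simp_all add: S_mat_def R_mat_def)
  have minus_one: "P (mat2 (-1) 0 0 (-1))" using mult_mat2[OF S S] by simp
  show S3: "P (mat2 0 1 (-1) 0)" using mult_mat2[OF minus_one S] by simp
  have one: "P (mat2 1 0 0 1)" using mult_mat2[OF minus_one minus_one] by simp
  have T: "P (mat2 1 1 0 1)" using mult_mat2[OF S3 R] by simp
  have T_inv: "P (mat2 1 (-1) 0 1)"
    using mult_mat2[OF mult_mat2[OF minus_one mult_mat2[OF R R]] S] by simp
  show T_pow: "P (mat2 1 n 0 1)" for n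
  proof (induct n rule: int_induct[where k = 0])
    case (step1 i)
    then show ?case using mult_mat2[OF step1(2) T] by (simp add: add.commute)
  next
    case (step2 i)
    then show ?case using mult_mat2[OF step2(2) T_inv] by (simp add: algebra_simps)
  qed (use one in simp)
  show "P (mat2 (-1) n 0 (-1))"
    using mult_mat2[OF minus_one T_pow[of "-n"]] by simp
qed

lemma SL2Z_generated:
  assumes "A \<in> SL2Z"
  shows "P A"
proof -
  have "P (mat2 a b c d)" if "a * d - b * c = 1" for a b c d :: int
    using that
  proof (induct "nat \<bar>c\<bar>" arbitrary: a b c d rule: less_induct)
    case less
    show ?case
    proof (cases "c = 0")
      case True
      then have "(a = 1 \<and> d = 1) \<or> (a = -1 \<and> d = -1)"
        using less.prems by (simp add: zmult_eq_1_iff)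
      then show ?thesis using special_elements True by auto
    next
      case False
      define q r where "q = a div c" and "r = a mod c"
      have a: "a = q * c + r" unfolding q_def r_def by simp
      have "\<bar>r\<bar> < \<bar>c\<bar>" unfolding r_def using False abs_mod_less by blast
      \<comment> \<open>Euclid's step: \<open>mat2 a b c d = T\<^sup>q * S\<^sup>3 * mat2 (-c) (-d) r (b - q * d)\<close>.\<close>
      moreover have det: "(-c) * (b - q * d) - (-d) * r = 1"
        using less.prems a by (simp add: algebra_simps)
      ultimately have "P (mat2 (-c) (-d) r (b - q * d))"
        using less.hyps by simp
      from mult_mat2[OF special_elements(2)[of q] mult_mat2[OF special_elements(1) this]] det
      show ?thesis by (simp add: a algebra_simps)
    qed
  qed
  with assms show ?thesis by (elim SL2Z_cases) simp
qed

end

lemmas SL2Z_induct [consumes 1, case_names mult S R] = SL2Z_generated[rotated 3]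

lemma smult_one_mat_mult: "(a \<cdot>\<^sub>m 1\<^sub>m n) * (b \<cdot>\<^sub>m 1\<^sub>m n) = ((a * b) :: 'a::comm_ring_1) \<cdot>\<^sub>m 1\<^sub>m n"
  by (rule eq_matI) (auto simp: mult_smult_assoc_mat[of "1\<^sub>m n" n n])

lemma eq_mat_on_vecI:
  fixes M N :: "'a::comm_ring_1 mat"
  assumes "M \<in> carrier_mat n n" "N \<in> carrier_mat n n"
    and "\<And>v. v \<in> carrier_vec n \<Longrightarrow> M *\<^sub>v v = N *\<^sub>v v"
  shows "M = N"
proof (rule eq_matI)
  fix i j assume "i < dim_row N" "j < dim_col N"
  with assms show "M $$ (i, j) = N $$ (i, j)"
    using assms(3)[of "unit_vec n j"] by (metis carrier_matD index_mult_mat_vec scalar_prod_right_unit unit_vec_carrier index_row(1))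
qed (use assms in auto)

lemma smult_one_mult_vec: "v \<in> carrier_vec n \<Longrightarrow> (c \<cdot>\<^sub>m 1\<^sub>m n) *\<^sub>v v = c \<cdot>\<^sub>v (v :: 'a::comm_ring_1 vec)"
  by (rule eq_vecI) (auto simp: scalar_prod_def if_distrib if_distribR sum.delta cong: if_cong)

lemma invertible_idempotent_mat:
  fixes P :: "'a::comm_ring_1 mat"
  assumes P: "P \<in> carrier_mat n n" and "invertible_mat P" and PP: "P * P = P"
  shows "P = 1\<^sub>m n"
proof -
  obtain Q where PQ: "P * Q = 1\<^sub>m n" and QP: "Q * P = 1\<^sub>m (dim_row Q)"
    using assms(2) P unfolding invertible_mat_def inverts_mat_def by auto
  have "dim_col Q = n" "dim_row Q = n"
    using arg_cong[OF PQ, of dim_col] arg_cong[OF QP, of dim_col] P by auto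
  then have Q: "Q \<in> carrier_mat n n" by blast
  have "P = P * (P * Q)" using PQ P by simp
  also have "\<dots> = P * Q" using assoc_mult_mat[OF P P Q] PP by simp
  finally show ?thesis using PQ by simp
qed

lemma is_subspace_line:
  assumes v: "v \<in> carrier_vec d"
  shows "is_subspace d (range (\<lambda>c. c \<cdot>\<^sub>v v))"
  unfolding is_subspace_def
proof (intro conjI ballI allI)
  have "0\<^sub>v d = 0 \<cdot>\<^sub>v v" using v by auto
  then show "0\<^sub>v d \<in> range (\<lambda>c. c \<cdot>\<^sub>v v)" by blast
  show "x + y \<in> range (\<lambda>c. c \<cdot>\<^sub>v v)" if "x \<in> range (\<lambda>c. c \<cdot>\<^sub>v v)" "y \<in> range (\<lambda>c. c \<cdot>\<^sub>v v)" for x y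
    using that add_smult_distrib_vec[symmetric] by blast
  show "k \<cdot>\<^sub>v x \<in> range (\<lambda>c. c \<cdot>\<^sub>v v)" if "x \<in> range (\<lambda>c. c \<cdot>\<^sub>v v)" for k x
    using that smult_smult_assoc by blast
qed (use v in auto)

lemma line_ne_carrier_vec:
  fixes v :: "'a::field vec"
  assumes "2 \<le> n"
  shows "range (\<lambda>c. c \<cdot>\<^sub>v v) \<noteq> carrier_vec n"
proof
  assume "range (\<lambda>c. c \<cdot>\<^sub>v v) = carrier_vec n"
  then obtain a b where a: "unit_vec n 0 = a \<cdot>\<^sub>v v" and b: "unit_vec n 1 = b \<cdot>\<^sub>v v"
    by (metis rangeE unit_vec_carrier)
  have "dim_vec v = n" using arg_cong[OF a, of dim_vec] by simp
  then have "a * v $ 0 = 1" "a * v $ 1 = 0" "b * v $ 1 = 1"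
    using arg_cong[OF a, of "\<lambda>x. x $ 0"] arg_cong[OF a, of "\<lambda>x. x $ 1"]
      arg_cong[OF b, of "\<lambda>x. x $ 1"] assms by auto
  then show False by (metis mult_eq_0_iff mult_zero_right zero_neq_one)
qed

section \<open>Irreducible representations\<close>

lemma is_rep_carrier [simp]: "is_rep d \<rho> \<Longrightarrow> A \<in> SL2Z \<Longrightarrow> \<rho> A \<in> carrier_mat d d"
  unfolding is_rep_def by auto

lemma is_rep_mult: "is_rep d \<rho> \<Longrightarrow> A \<in> SL2Z \<Longrightarrow> B \<in> SL2Z \<Longrightarrow> \<rho> (A * B) = \<rho> A * \<rho> B"
  unfolding is_rep_def by auto

lemma is_rep_one: "is_rep d \<rho> \<Longrightarrow> \<rho> (mat2 1 0 0 1) = 1\<^sub>m d"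
  using is_rep_mult[of d \<rho> "mat2 1 0 0 1" "mat2 1 0 0 1"]
  by (intro invertible_idempotent_mat) (auto simp: is_rep_def)

context
  fixes d :: nat and \<rho> :: "int mat \<Rightarrow> complex mat"
  assumes irr: "irreducible_rep d \<rho>"
begin

private lemma rep: "is_rep d \<rho>"
  using irr by (simp add: irreducible_rep_def)

lemma irreducible_rep_invariant_subspace:
  assumes W: "is_subspace d W"
    and S: "\<And>w. w \<in> W \<Longrightarrow> \<rho> S_mat *\<^sub>v w \<in> W" and R: "\<And>w. w \<in> W \<Longrightarrow> \<rho> R_mat *\<^sub>v w \<in> W"
  shows "W = {0\<^sub>v d} \<or> W = carrier_vec d"
proof -
  have "\<forall>w\<in>W. \<rho> A *\<^sub>v w \<in> W" if "A \<in> SL2Z" for A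
    using that
  proof (induction rule: SL2Z_induct)
    case (mult g h)
    moreover have "\<rho> (g * h) *\<^sub>v w = \<rho> g *\<^sub>v (\<rho> h *\<^sub>v w)" if "w \<in> W" for w
      using that W mult.hyps is_rep_mult[OF rep]
      by (auto simp: is_subspace_def rep assoc_mult_mat_vec[of _ d d _ d])
    ultimately show ?case by simp
  qed (use S R in auto)
  then show ?thesis using irr W by (simp add: irreducible_rep_def)
qed

lemma schur_lemma:
  assumes M: "M \<in> carrier_mat d d"
    and MS: "M * \<rho> S_mat = \<rho> S_mat * M" and MR: "M * \<rho> R_mat = \<rho> R_mat * M"
  shows "\<exists>c. M = c \<cdot>\<^sub>m 1\<^sub>m d"
proof -
  obtain c where "eigenvalue M c"
    using spectrum_non_empty[OF M] irr by (auto simp: spectrum_def irreducible_rep_def)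
  then obtain v where v: "v \<in> carrier_vec d" "v \<noteq> 0\<^sub>v d" "M *\<^sub>v v = c \<cdot>\<^sub>v v"
    using M by (auto simp: eigenvalue_def eigenvector_def)
  define W where "W = {w \<in> carrier_vec d. M *\<^sub>v w = c \<cdot>\<^sub>v w}"
  have "is_subspace d W"
    using M by (auto simp: is_subspace_def W_def mult_add_distrib_mat_vec mult_mat_vec smult_add_distrib_vec)
  moreover have "\<rho> g *\<^sub>v w \<in> W" if "g \<in> {S_mat, R_mat}" "w \<in> W" for g w
  proof -
    have G: "\<rho> g \<in> carrier_mat d d" using that(1) rep by auto
    have w: "w \<in> carrier_vec d" "M *\<^sub>v w = c \<cdot>\<^sub>v w" using that(2) by (auto simp: W_def)
    have "M *\<^sub>v (\<rho> g *\<^sub>v w) = (M * \<rho> g) *\<^sub>v w" using M G w by (simp add: assoc_mult_mat_vec)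
    also have "M * \<rho> g = \<rho> g * M" using that(1) MS MR by auto
    also have "(\<rho> g * M) *\<^sub>v w = \<rho> g *\<^sub>v (c \<cdot>\<^sub>v w)" using M G w by (simp add: assoc_mult_mat_vec)
    also have "\<dots> = c \<cdot>\<^sub>v (\<rho> g *\<^sub>v w)" using G w by (simp add: mult_mat_vec)
    finally show ?thesis using that G by (simp add: W_def)
  qed
  ultimately have "W = {0\<^sub>v d} \<or> W = carrier_vec d"
    by (intro irreducible_rep_invariant_subspace) auto
  moreover have "v \<in> W" using v by (simp add: W_def)
  ultimately have "W = carrier_vec d" using v by auto
  then have "M = c \<cdot>\<^sub>m 1\<^sub>m d"
    using M by (intro eq_mat_on_vecI) (auto simp: W_def smult_one_mult_vec)
  then show ?thesis ..
qed

lemma rep_minus_one_mat: "\<exists>\<epsilon>. \<epsilon>\<^sup>2 = 1 \<and> \<rho> minus_one_mat = \<epsilon> \<cdot>\<^sub>m 1\<^sub>m d"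
proof -
  have central: "\<rho> minus_one_mat * \<rho> g = \<rho> g * \<rho> minus_one_mat" if "g \<in> SL2Z" for g
  proof -
    have "\<rho> minus_one_mat * \<rho> g = \<rho> (minus_one_mat * g)" using that rep by (simp add: is_rep_mult)
    also have "\<dots> = \<rho> (g * minus_one_mat)" using minus_one_mat_central[OF that] by simp
    also have "\<dots> = \<rho> g * \<rho> minus_one_mat" using that rep by (simp add: is_rep_mult)
    finally show ?thesis .
  qed
  obtain \<epsilon> where \<epsilon>: "\<rho> minus_one_mat = \<epsilon> \<cdot>\<^sub>m 1\<^sub>m d"
    using schur_lemma[OF is_rep_carrier[OF rep] central central] by auto
  have "(\<epsilon> * \<epsilon>) \<cdot>\<^sub>m 1\<^sub>m d = 1\<^sub>m d"
    using is_rep_mult[OF rep, of minus_one_mat minus_one_mat] is_rep_one[OF rep] \<epsilon> SL2Z_relations(3)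
    by (simp add: smult_one_mat_mult)
  then have "((\<epsilon> * \<epsilon>) \<cdot>\<^sub>m 1\<^sub>m d) $$ (0, 0) = (1\<^sub>m d :: complex mat) $$ (0, 0)"
    by simp
  moreover have "0 < d" using irr by (simp add: irreducible_rep_def)
  ultimately have "\<epsilon> * \<epsilon> = 1" by simp
  with \<epsilon> show ?thesis by (auto simp: power2_eq_square)
qed

lemma no_common_eigenvector:
  assumes "2 \<le> d" and v: "v \<in> carrier_vec d" "v \<noteq> 0\<^sub>v d"
    and S: "\<rho> S_mat *\<^sub>v v = \<beta> \<cdot>\<^sub>v v" and R: "\<rho> R_mat *\<^sub>v v = \<alpha> \<cdot>\<^sub>v v"
  shows False
proof -
  have "\<rho> g *\<^sub>v (c \<cdot>\<^sub>v v) \<in> range (\<lambda>c. c \<cdot>\<^sub>v v)" if g: "g \<in> {S_mat, R_mat}" for g c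
  proof -
    obtain \<mu> where "\<rho> g *\<^sub>v v = \<mu> \<cdot>\<^sub>v v" using g S R by blast
    moreover have "\<rho> g *\<^sub>v (c \<cdot>\<^sub>v v) = c \<cdot>\<^sub>v (\<rho> g *\<^sub>v v)"
      using g by (auto intro!: mult_mat_vec[OF is_rep_carrier[OF rep] v(1)])
    ultimately show ?thesis by (simp add: smult_smult_assoc)
  qed
  then have "range (\<lambda>c. c \<cdot>\<^sub>v v) = {0\<^sub>v d} \<or> range (\<lambda>c. c \<cdot>\<^sub>v v) = carrier_vec d"
    by (intro irreducible_rep_invariant_subspace is_subspace_line[OF v(1)]) auto
  moreover have "v \<in> range (\<lambda>c. c \<cdot>\<^sub>v v)" using v by (auto intro: range_eqI[of _ _ 1])
  ultimately show False using v line_ne_carrier_vec[OF assms(1)] by auto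
qed

end

section \<open>Matrices of finite order are semisimple\<close>

lemma mult_vec_pow_eigen:
  fixes M :: "'a::field mat"
  assumes M: "M \<in> carrier_mat n n" and w: "w \<in> carrier_vec n" and Mw: "M *\<^sub>v w = \<mu> \<cdot>\<^sub>v w"
  shows "M ^\<^sub>m j *\<^sub>v w = \<mu> ^ j \<cdot>\<^sub>v w"
proof (induction j)
  case (Suc j)
  have "M ^\<^sub>m Suc j *\<^sub>v w = M ^\<^sub>m j *\<^sub>v (M *\<^sub>v w)"
    using M w by (simp add: assoc_mult_mat_vec[of _ n n _ n])
  also have "\<dots> = \<mu> \<cdot>\<^sub>v (M ^\<^sub>m j *\<^sub>v w)"
    using M w by (simp add: Mw mult_mat_vec[OF pow_carrier_mat[OF M]])
  finally show ?case using Suc w by (simp add: smult_smult_assoc)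
qed (use M w in simp)

lemma mult_vec_pow_jordan_chain:
  fixes M :: "'a::field mat"
  assumes M: "M \<in> carrier_mat n n" and v: "v \<in> carrier_vec n" and w: "w \<in> carrier_vec n"
    and Mv: "M *\<^sub>v v = \<mu> \<cdot>\<^sub>v v + w" and Mw: "M *\<^sub>v w = \<mu> \<cdot>\<^sub>v w"
  shows "M ^\<^sub>m Suc j *\<^sub>v v = \<mu> ^ Suc j \<cdot>\<^sub>v v + (of_nat (Suc j) * \<mu> ^ j) \<cdot>\<^sub>v w"
proof (induction j)
  case 0
  show ?case using M v by (simp add: Mv)
next
  case (Suc j)
  have P: "M ^\<^sub>m Suc j \<in> carrier_mat n n" using M by (rule pow_carrier_mat)
  have "M ^\<^sub>m Suc (Suc j) *\<^sub>v v = M ^\<^sub>m Suc j *\<^sub>v (\<mu> \<cdot>\<^sub>v v + w)"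
    using assoc_mult_mat_vec[OF P M v] by (simp only: pow_mat.simps(2)[of M "Suc j"] Mv)
  also have "\<dots> = \<mu> \<cdot>\<^sub>v (M ^\<^sub>m Suc j *\<^sub>v v) + M ^\<^sub>m Suc j *\<^sub>v w"
    using v w by (simp add: mult_add_distrib_mat_vec[OF P _ w] mult_mat_vec[OF P v] del: pow_mat.simps)
  finally show ?case
    using Suc v w mult_vec_pow_eigen[OF M w Mw, of "Suc j"]
    by (intro eq_vecI) (auto simp: algebra_simps)
qed

lemma char_matrix_mult_vec:
  "M \<in> carrier_mat n n \<Longrightarrow> v \<in> carrier_vec n \<Longrightarrow> char_matrix M \<mu> *\<^sub>v v = M *\<^sub>v v - \<mu> \<cdot>\<^sub>v v"
  unfolding char_matrix_def
  by (rule eq_vecI) (auto simp: add_mult_distrib_mat_vec[of M n n] smult_one_mult_vec)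

text \<open>Since \<open>x\<^sup>k - c\<close> has only simple roots in characteristic 0, a matrix with \<open>M\<^sup>k = c\<close>
  has no Jordan chains of length two at a nonzero eigenvalue.\<close>
lemma char_matrix_semisimple_of_pow_eq_scalar:
  fixes M :: "'a::field_char_0 mat"
  assumes M: "M \<in> carrier_mat n n" and Mk: "M ^\<^sub>m k = c \<cdot>\<^sub>m 1\<^sub>m n" and "0 < k" and "\<mu> \<noteq> 0"
    and v: "v \<in> carrier_vec n" and sq: "char_matrix M \<mu> *\<^sub>v (char_matrix M \<mu> *\<^sub>v v) = 0\<^sub>v n"
  shows "char_matrix M \<mu> *\<^sub>v v = 0\<^sub>v n"
proof -
  define w where "w = char_matrix M \<mu> *\<^sub>v v"
  obtain j where k: "k = Suc j" using \<open>0 < k\<close> by (cases k) auto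
  have w: "w \<in> carrier_vec n" unfolding w_def using char_matrix_closed[OF M] v by (rule mult_mat_vec_carrier)
  have Mv: "M *\<^sub>v v = \<mu> \<cdot>\<^sub>v v + w"
    using M v by (intro eq_vecI) (auto simp: w_def char_matrix_mult_vec)
  have Mw0: "M *\<^sub>v w - \<mu> \<cdot>\<^sub>v w = 0\<^sub>v n"
    using sq char_matrix_mult_vec[OF M w] by (simp add: w_def)
  have Mw: "M *\<^sub>v w = \<mu> \<cdot>\<^sub>v w"
  proof (rule eq_vecI)
    fix i assume "i < dim_vec (\<mu> \<cdot>\<^sub>v w)"
    then show "(M *\<^sub>v w) $ i = (\<mu> \<cdot>\<^sub>v w) $ i"
      using arg_cong[OF Mw0, of "\<lambda>u. u $ i"] M w by simp
  qed (use M w in simp)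
  note chain = mult_vec_pow_jordan_chain[OF M v w Mv Mw]
  have E1: "c \<cdot>\<^sub>v v = \<mu> ^ Suc j \<cdot>\<^sub>v v + (of_nat (Suc j) * \<mu> ^ j) \<cdot>\<^sub>v w"
    using chain[of j] Mk v k by (simp add: smult_one_mult_vec)
  have "M ^\<^sub>m Suc k *\<^sub>v v = M ^\<^sub>m k *\<^sub>v (M *\<^sub>v v)"
    unfolding pow_mat.simps(2)[of M k] by (rule assoc_mult_mat_vec[OF pow_carrier_mat[OF M] M v])
  then have E2: "c \<cdot>\<^sub>v (\<mu> \<cdot>\<^sub>v v + w) = \<mu> ^ Suc (Suc j) \<cdot>\<^sub>v v + (of_nat (Suc (Suc j)) * \<mu> ^ Suc j) \<cdot>\<^sub>v w"
    using chain[of "Suc j"] Mk v w k by (simp add: smult_one_mult_vec Mv del: pow_mat.simps)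
  have "w $ i = 0" if i: "i < n" for i
  proof -
    define x y m where "x = v $ i" and "y = w $ i" and "m = \<mu> ^ j"
    have e1: "c * x = \<mu> * m * x + of_nat (Suc j) * m * y"
      using arg_cong[OF E1, of "\<lambda>u. u $ i"] i v w by (simp add: x_def y_def m_def)
    have e2: "c * (\<mu> * x + y) = \<mu> * \<mu> * m * x + of_nat (Suc (Suc j)) * \<mu> * m * y"
      using arg_cong[OF E2, of "\<lambda>u. u $ i"] i v w by (simp add: x_def y_def m_def algebra_simps)
    have cy: "c * y = \<mu> * m * y"
      using e1 e2 by (simp add: algebra_simps)
    have "of_nat (Suc j) * m * y * y = (c * y - \<mu> * m * y) * x - (c * x - \<mu> * m * x - of_nat (Suc j) * m * y) * y"
      by (simp add: algebra_simps)
    then have "of_nat (Suc j) * m * y * y = 0"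
      using e1 cy by simp
    moreover have "m \<noteq> 0" using \<open>\<mu> \<noteq> 0\<close> by (simp add: m_def)
    ultimately show ?thesis using of_nat_neq_0[of j] by (simp add: y_def del: of_nat_Suc)
  qed
  then show ?thesis using w by (intro eq_vecI) (auto simp: w_def[symmetric])
qed

lemma pow_mult_vec_eq_0_iff:
  fixes C :: "'a::field mat"
  assumes C: "C \<in> carrier_mat n n"
    and sq: "\<And>v. v \<in> carrier_vec n \<Longrightarrow> C *\<^sub>v (C *\<^sub>v v) = 0\<^sub>v n \<Longrightarrow> C *\<^sub>v v = 0\<^sub>v n"
    and v: "v \<in> carrier_vec n"
  shows "C ^\<^sub>m Suc k *\<^sub>v v = 0\<^sub>v n \<longleftrightarrow> C *\<^sub>v v = 0\<^sub>v n"
  using v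
proof (induction k arbitrary: v)
  case 0
  then show ?case using C by simp
next
  case (Suc k)
  have "C ^\<^sub>m Suc (Suc k) *\<^sub>v v = C ^\<^sub>m Suc k *\<^sub>v (C *\<^sub>v v)"
    unfolding pow_mat.simps(2)[of C "Suc k"] by (rule assoc_mult_mat_vec[OF pow_carrier_mat[OF C] C Suc.prems])
  also have "\<dots> = 0\<^sub>v n \<longleftrightarrow> C *\<^sub>v (C *\<^sub>v v) = 0\<^sub>v n"
    using Suc C by simp
  also have "\<dots> \<longleftrightarrow> C *\<^sub>v v = 0\<^sub>v n"
    using sq[OF Suc.prems] C by auto
  finally show ?case .
qed

lemma kernel_dim_char_matrix_eq_order:
  fixes M :: "complex mat"
  assumes M: "M \<in> carrier_mat n n"
    and sq: "\<And>v. v \<in> carrier_vec n \<Longrightarrow> char_matrix M \<mu> *\<^sub>v (char_matrix M \<mu> *\<^sub>v v) = 0\<^sub>v n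
      \<Longrightarrow> char_matrix M \<mu> *\<^sub>v v = 0\<^sub>v n"
  shows "kernel_dim (char_matrix M \<mu>) = Polynomial.order \<mu> (char_poly M)"
proof -
  let ?C = "char_matrix M \<mu>"
  have C: "?C \<in> carrier_mat n n" using M by simp
  obtain n_as where jnf: "jordan_nf M n_as"
    using char_poly_factorized[OF M] jordan_nf_exists[OF M] by blast
  define sizes where "sizes = map fst [(s, a)\<leftarrow>n_as. a = \<mu>]"
  have order: "Polynomial.order \<mu> (char_poly M) = sum_list sizes"
    unfolding sizes_def jordan_nf_order[OF jnf] by (simp add: case_prod_unfold)
  have "Polynomial.order \<mu> (char_poly M) \<le> n"
    using order_degree[of "char_poly M" \<mu>] degree_monic_char_poly[OF M] by fastforce
  then have small: "s \<le> n" if "s \<in> set sizes" for s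
    using member_le_sum_list[OF that] order by simp
  have "mat_kernel (?C ^\<^sub>m Suc n) = mat_kernel ?C"
    using pow_mult_vec_eq_0_iff[OF C sq] pow_carrier_mat[OF C] C by (auto simp: mat_kernel_def)
  then have "kernel_dim ?C = dim_gen_eigenspace M \<mu> (Suc n)"
    using C by (simp add: dim_gen_eigenspace_def kernel_dim_def)
  also have "\<dots> = (\<Sum>s\<leftarrow>sizes. min (Suc n) s)"
    unfolding sizes_def by (rule dim_gen_eigenspace[OF jnf])
  also have "\<dots> = sum_list sizes"
    using small by (subst map_idI[of sizes]) (auto simp: min_absorb2 le_SucI)
  finally show ?thesis using order by simp
qed

section \<open>Intersecting kernels\<close>

lemma kernel_independent_set:
  fixes C :: "'a::field mat"
  assumes C: "C \<in> carrier_mat m n"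
  obtains U where "finite U" "card U = kernel_dim C" "U \<subseteq> mat_kernel C"
    "\<not> module.lin_dep class_ring (module_vec TYPE('a) n) U"
proof -
  interpret K: kernel m n C by (unfold_locales, rule C)
  obtain U where U: "finite U" "K.Ker.basis U" using kernel_basis_exists[OF C] by blast
  have "U \<subseteq> mat_kernel C" "\<not> K.Ker.lin_dep U" using U(2) unfolding K.Ker.basis_def by auto
  moreover have "kernel_dim C = card U" using K.Ker.dim_basis[OF U] by simp
  ultimately show thesis using that U(1) K.lindep_same by auto
qed

lemma (in vec_space) lin_dep_disjoint_union:
  assumes U: "U1 \<subseteq> carrier_vec n" "U2 \<subseteq> carrier_vec n" "U1 \<inter> U2 = {}"
    and indep: "\<not> lin_dep U1" "\<not> lin_dep U2" and dep: "lin_dep (U1 \<union> U2)"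
  obtains a A1 A2 where "finite A1" "finite A2" "A1 \<subseteq> U1" "A2 \<subseteq> U2"
    "lincomb a A1 \<noteq> 0\<^sub>v n" "lincomb a A1 + lincomb a A2 = 0\<^sub>v n"
proof -
  obtain A a w where A: "finite A" "A \<subseteq> U1 \<union> U2" "lincomb a A = 0\<^sub>v n" "w \<in> A" "a w \<noteq> 0"
    using dep unfolding lin_dep_def by auto
  define A1 A2 where "A1 = A \<inter> U1" and "A2 = A - U1"
  have A12: "A1 \<subseteq> U1" "A2 \<subseteq> U2" "A = A1 \<union> A2" "A1 \<inter> A2 = {}" "finite A1" "finite A2"
    using A U unfolding A1_def A2_def by auto
  have carrier: "A1 \<subseteq> carrier_vec n" "A2 \<subseteq> carrier_vec n" using A12 U by auto
  have sum: "lincomb a A1 + lincomb a A2 = 0\<^sub>v n"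
    using A(3) lincomb_union[OF carrier A12(4) A12(5,6)] A12(3) by simp
  have "lincomb a A1 \<noteq> 0\<^sub>v n"
  proof
    assume x: "lincomb a A1 = 0\<^sub>v n"
    then have "lincomb a A2 = 0\<^sub>v n" using sum carrier A12 by simp
    then have "a \<in> A1 \<rightarrow> {0}" "a \<in> A2 \<rightarrow> {0}"
      using not_lindepD[OF indep(1) A12(5) A12(1), of a] not_lindepD[OF indep(2) A12(6) A12(2), of a] x
      by auto
    then show False using A(4,5) A12(3) by auto
  qed
  with A12 sum that show thesis by blast
qed

lemma kernels_intersect:
  fixes C1 C2 :: "'a::field mat"
  assumes C1: "C1 \<in> carrier_mat m1 n" and C2: "C2 \<in> carrier_mat m2 n"
    and dim: "n < kernel_dim C1 + kernel_dim C2"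
  obtains v where "v \<in> carrier_vec n" "v \<noteq> 0\<^sub>v n" "C1 *\<^sub>v v = 0\<^sub>v m1" "C2 *\<^sub>v v = 0\<^sub>v m2"
proof -
  note found = that
  interpret V: vec_space "TYPE('a)" n .
  interpret K1: kernel m1 n C1 by (unfold_locales, rule C1)
  interpret K2: kernel m2 n C2 by (unfold_locales, rule C2)
  obtain U1 where U1: "finite U1" "card U1 = kernel_dim C1" "U1 \<subseteq> mat_kernel C1" "\<not> V.lin_dep U1"
    using kernel_independent_set[OF C1] by blast
  obtain U2 where U2: "finite U2" "card U2 = kernel_dim C2" "U2 \<subseteq> mat_kernel C2" "\<not> V.lin_dep U2"
    using kernel_independent_set[OF C2] by blast
  have carrier: "U1 \<subseteq> carrier_vec n" "U2 \<subseteq> carrier_vec n"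
    using U1(3) U2(3) mat_kernel_carrier[OF C1] mat_kernel_carrier[OF C2] by auto
  have common: thesis if "v \<in> mat_kernel C1" "v \<in> mat_kernel C2" "v \<noteq> 0\<^sub>v n" for v
    using found that mat_kernelD[OF C1] mat_kernelD[OF C2] by blast
  show thesis
  proof (cases "U1 \<inter> U2 = {}")
    case False
    then obtain v where v: "v \<in> U1" "v \<in> U2" by blast
    have "v \<noteq> 0\<^sub>v n" using V.vs_zero_lin_dep[of U1] U1 carrier v by auto
    then show ?thesis using common v U1 U2 by blast
  next
    case True
    have "card (U1 \<union> U2) > V.dim"
      using True U1 U2 dim V.dim_is_n by (simp add: card_Un_disjoint)
    then have "V.lin_dep (U1 \<union> U2)"
      using V.li_le_dim[OF V.fin_dim, of "U1 \<union> U2"] carrier by auto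
    then obtain a A1 A2 where A: "finite A1" "finite A2" "A1 \<subseteq> U1" "A2 \<subseteq> U2"
      and x: "V.lincomb a A1 \<noteq> 0\<^sub>v n" and sum: "V.lincomb a A1 + V.lincomb a A2 = 0\<^sub>v n"
      by (rule V.lin_dep_disjoint_union[OF carrier True U1(4) U2(4)])
    have carrier_x: "V.lincomb a A1 \<in> carrier_vec n" "V.lincomb a A2 \<in> carrier_vec n"
      using A carrier by auto
    have "V.lincomb a A2 = (-1) \<cdot>\<^sub>v V.lincomb a A1"
    proof (rule eq_vecI)
      fix i assume "i < dim_vec ((-1) \<cdot>\<^sub>v V.lincomb a A1)"
      then show "V.lincomb a A2 $ i = ((-1) \<cdot>\<^sub>v V.lincomb a A1) $ i"
        using arg_cong[OF sum, of "\<lambda>u. u $ i"] carrier_vecD[OF carrier_x(1)] carrier_x(2)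
        by (simp add: add_eq_0_iff2)
    qed (use carrier_vecD[OF carrier_x(1)] carrier_vecD[OF carrier_x(2)] in simp)
    moreover have "V.lincomb a A2 \<in> mat_kernel C2"
      using K2.Ker.lincomb_closed[of A2 a] K2.lincomb_same[of A2 a] A U2(3) by auto
    ultimately have "(-1) \<cdot>\<^sub>v V.lincomb a A2 \<in> mat_kernel C2"
      by (intro mat_kernel_smult[OF C2]) simp
    then have "V.lincomb a A1 \<in> mat_kernel C2"
      using \<open>V.lincomb a A2 = _\<close> carrier_x by (simp add: smult_smult_assoc)
    moreover have "V.lincomb a A1 \<in> mat_kernel C1"
      using K1.Ker.lincomb_closed[of A1 a] K1.lincomb_same[of A1 a] A U1(3) by auto
    ultimately show ?thesis using common x by blast
  qed
qed

section \<open>Eigenvalue multiplicities and the determinant\<close>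

lemma eigenvalue_pow_eq:
  fixes M :: "'a::field mat"
  assumes M: "M \<in> carrier_mat n n" and "eigenvalue M a" and Mk: "M ^\<^sub>m k = c \<cdot>\<^sub>m 1\<^sub>m n"
  shows "a ^ k = c"
proof -
  obtain v where v: "eigenvector M v a" using assms(2) by (auto simp: eigenvalue_def)
  have v_carrier: "v \<in> carrier_vec n" and "v \<noteq> 0\<^sub>v n" using v M by (auto simp: eigenvector_def)
  obtain i where i: "i < n" "v $ i \<noteq> 0"
  proof (rule ccontr)
    assume "\<not> thesis"
    then have "v = 0\<^sub>v n" using that v_carrier by (intro eq_vecI) auto
    with \<open>v \<noteq> 0\<^sub>v n\<close> show False ..
  qed
  have "a ^ k \<cdot>\<^sub>v v = c \<cdot>\<^sub>v v"
    using eigenvector_pow[OF M v, of k] Mk v_carrier by (simp add: smult_one_mult_vec)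
  then have "(a ^ k \<cdot>\<^sub>v v) $ i = (c \<cdot>\<^sub>v v) $ i" by simp
  then show ?thesis using i v_carrier by simp
qed

lemma order_prod_linear_factors:
  "Polynomial.order x (\<Prod>a\<leftarrow>as. [:- a, 1:]) = count_list as (x :: 'a::idom)"
proof (induction as)
  case (Cons a as)
  have "Polynomial.order x [:- a, 1:] = (if x = a then 1 else 0)"
    using order_power_n_n[of a 1] by (auto intro: order_0I)
  moreover have "(\<Prod>a\<leftarrow>as. [:- a, 1:]) \<noteq> 0" by (auto simp: prod_list_zero_iff)
  then have "[:- a, 1:] * (\<Prod>a\<leftarrow>as. [:- a, 1:]) \<noteq> 0"
    by (simp only: mult_eq_0_iff de_Morgan_disj) simp
  then have "Polynomial.order x (\<Prod>a\<leftarrow>a # as. [:- a, 1:]) =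
      Polynomial.order x [:- a, 1:] + Polynomial.order x (\<Prod>a\<leftarrow>as. [:- a, 1:])"
    unfolding list.map prod_list.Cons by (rule order_mult)
  ultimately show ?case using Cons by simp
qed simp

lemma prod_list_eq_prod_count_list:
  assumes "finite X" "set xs \<subseteq> X"
  shows "prod_list xs = (\<Prod>x\<in>X. x ^ count_list xs (x :: 'a::comm_monoid_mult))"
proof -
  have "prod_list xs = (\<Prod>x\<in>set xs. x ^ count_list xs x)"
    using prod_mset_multiplicity[of "mset xs"] by (simp add: prod_mset_prod_list count_mset)
  also have "\<dots> = (\<Prod>x\<in>X. x ^ count_list xs x)"
    using assms by (intro prod.mono_neutral_left) (auto simp: count_list_0_iff)
  finally show ?thesis .
qed

lemma det_eq_poly_char_poly_0:
  fixes M :: "'a::field mat"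
  assumes M: "M \<in> carrier_mat n n"
  shows "det M = (-1) ^ n * poly (char_poly M) 0"
proof -
  have "poly (char_poly M) 0 = det (- char_matrix M 0)" by (rule char_poly_matrix[OF M])
  also have "- char_matrix M 0 = (-1) \<cdot>\<^sub>m M" using M by (intro eq_matI) (auto simp: char_matrix_def)
  also have "det \<dots> = (-1) ^ n * det M" using M by simp
  finally show ?thesis by simp
qed

lemma det_eq_prod_eigenvalues_char_poly:
  fixes M :: "'a::field mat"
  assumes M: "M \<in> carrier_mat n n" and cp: "char_poly M = (\<Prod>a\<leftarrow>as. [:- a, 1:])"
  shows "det M = prod_list as"
proof -
  have "length as = n"
    using degree_monic_char_poly[OF M] cp by (simp add: degree_linear_factors)
  have "det M = (-1) ^ n * poly (char_poly M) 0" by (rule det_eq_poly_char_poly_0[OF M])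
  also have "poly (char_poly M) 0 = (-1) ^ length as * prod_list as"
    unfolding cp poly_prod_list by (induction as) auto
  finally show ?thesis using \<open>length as = n\<close> by (simp flip: power_add)
qed

lemma det_pow_mat: "A \<in> carrier_mat n n \<Longrightarrow> det (A ^\<^sub>m k) = det A ^ k"
  by (induction k) (simp_all add: det_mult[of _ n])

context
  fixes M :: "complex mat" and n :: nat and V :: "complex set"
  assumes M: "M \<in> carrier_mat n n" and V: "finite V" "\<And>x. eigenvalue M x \<Longrightarrow> x \<in> V"
begin

private lemma eigenvalue_list:
  obtains as where "char_poly M = (\<Prod>a\<leftarrow>as. [:- a, 1:])" "length as = n" "set as \<subseteq> V"
proof -
  obtain as where as: "char_poly M = (\<Prod>a\<leftarrow>as. [:- a, 1:])" "length as = n"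
    using char_poly_factorized[OF M] by blast
  have "poly (char_poly M) a = 0" if "a \<in> set as" for a
    using that unfolding as(1) poly_prod_list_zero_iff by force
  then have "set as \<subseteq> V"
    using V(2) eigenvalue_root_char_poly[OF M] by blast
  with as that show thesis by blast
qed

lemma sum_order_char_poly: "(\<Sum>x\<in>V. Polynomial.order x (char_poly M)) = n"
proof -
  obtain as where as: "char_poly M = (\<Prod>a\<leftarrow>as. [:- a, 1:])" "length as = n" "set as \<subseteq> V"
    using eigenvalue_list by blast
  have "(\<Sum>x\<in>V. Polynomial.order x (char_poly M)) = (\<Sum>x\<in>V. count_list as x)"
    unfolding as(1) order_prod_linear_factors ..
  also have "\<dots> = n" using sum_count_set[OF as(3) V(1)] as(2) by simp
  finally show ?thesis .
qed

lemma det_eq_prod_order_char_poly: "det M = (\<Prod>x\<in>V. x ^ Polynomial.order x (char_poly M))"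
proof -
  obtain as where as: "char_poly M = (\<Prod>a\<leftarrow>as. [:- a, 1:])" "length as = n" "set as \<subseteq> V"
    using eigenvalue_list by blast
  have "det M = prod_list as" by (rule det_eq_prod_eigenvalues_char_poly[OF M as(1)])
  also have "\<dots> = (\<Prod>x\<in>V. x ^ count_list as x)" by (rule prod_list_eq_prod_count_list[OF V(1) as(3)])
  also have "\<dots> = (\<Prod>x\<in>V. x ^ Polynomial.order x (char_poly M))"
    unfolding as(1) order_prod_linear_factors ..
  finally show ?thesis .
qed

end

section \<open>The determinant of \<open>\<rho> T\<close>\<close>

definition omega :: complex where "omega = Complex (-1/2) (sqrt 3 / 2)"

lemma omega_props: "omega ^ 3 = 1" "omega \<noteq> 1" "omega\<^sup>2 \<noteq> 1" "omega \<noteq> 0"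
  and cube_root_cases: "a ^ 3 = b ^ 3 \<Longrightarrow> a = b \<or> a = b * omega \<or> a = b * omega\<^sup>2"
proof -
  have sq3: "sqrt 3 * sqrt 3 = (3::real)" by simp
  have o: "omega\<^sup>2 + omega + 1 = 0"
    unfolding omega_def by (simp add: complex_eq_iff power2_eq_square sq3)
  have "omega ^ 3 - 1 = (omega - 1) * (omega\<^sup>2 + omega + 1)"
    by (simp add: algebra_simps power2_eq_square power3_eq_cube)
  then show "omega ^ 3 = 1" using o by simp
  show "omega \<noteq> 1" "omega\<^sup>2 \<noteq> 1" "omega \<noteq> 0"
    unfolding omega_def by (simp_all add: complex_eq_iff power2_eq_square)
  assume "a ^ 3 = b ^ 3"
  moreover have "(a - b) * (a - b * omega) * (a - b * omega\<^sup>2) =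
      a ^ 3 - a * a * b * (omega\<^sup>2 + omega + 1) + a * b * b * omega * (omega\<^sup>2 + omega + 1) - b ^ 3 * omega ^ 3"
    by (simp add: algebra_simps power2_eq_square power3_eq_cube)
  ultimately show "a = b \<or> a = b * omega \<or> a = b * omega\<^sup>2"
    using o \<open>omega ^ 3 = 1\<close> by auto
qed

lemma e_sum: "(\<Prod>i<(d::nat). e (r i)) = e (\<Sum>i<d. r i)"
  unfolding e_def of_real_sum sum_distrib_left by (subst exp_sum) simp_all

lemma e_pow: "e x ^ k = e (real k * x)"
  unfolding e_def by (simp add: exp_of_nat_mult[symmetric] algebra_simps)

lemma e_eq_1_imp_int:
  assumes "e y = 1"
  obtains n :: int where "y = of_int n"
proof -
  have "cos (2 * pi * y) = 1"
    using arg_cong[OF assms, of Re] by (simp add: e_def Re_exp)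
  then obtain n :: int where "2 * pi * y = real_of_int n * 2 * pi" using cos_one_2pi_int by blast
  then show thesis using that[of n] by simp
qed

context
  fixes d :: nat and \<rho> :: "int mat \<Rightarrow> complex mat" and \<epsilon> :: complex
  assumes irr: "irreducible_rep d \<rho>"
    and \<epsilon>: "\<epsilon>\<^sup>2 = 1" and minus_one: "\<rho> minus_one_mat = \<epsilon> \<cdot>\<^sub>m 1\<^sub>m d"
begin

private lemma is_rep_\<rho>: "is_rep d \<rho>"
  using irr by (simp add: irreducible_rep_def)

lemma rep_S_pow: "\<rho> S_mat ^\<^sub>m 2 = \<epsilon> \<cdot>\<^sub>m 1\<^sub>m d"
proof -
  have "\<rho> S_mat ^\<^sub>m 2 = \<rho> S_mat * \<rho> S_mat" using is_rep_\<rho> by (simp add: numeral_2_eq_2)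
  also have "\<dots> = \<rho> (S_mat * S_mat)" using is_rep_\<rho> by (simp add: is_rep_mult)
  finally show ?thesis using SL2Z_relations(1) minus_one by simp
qed

lemma rep_R_pow: "\<rho> R_mat ^\<^sub>m 3 = \<epsilon> \<cdot>\<^sub>m 1\<^sub>m d"
proof -
  have "\<rho> R_mat ^\<^sub>m 3 = \<rho> R_mat * \<rho> R_mat * \<rho> R_mat" using is_rep_\<rho> by (simp add: numeral_3_eq_3)
  also have "\<dots> = \<rho> (R_mat * R_mat * R_mat)" using is_rep_\<rho> by (simp add: is_rep_mult SL2Z_mult)
  finally show ?thesis using SL2Z_relations(2) minus_one by simp
qed

lemma rep_T_mat: "\<rho> T_mat = \<rho> S_mat * \<rho> S_mat * \<rho> S_mat * \<rho> R_mat"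
  using is_rep_\<rho> by (simp add: SL2Z_relations(4) is_rep_mult SL2Z_mult)

lemma order_char_poly_rep_S_R_le:
  assumes "2 \<le> d" "x \<noteq> 0" "y \<noteq> 0"
  shows "Polynomial.order x (char_poly (\<rho> S_mat)) + Polynomial.order y (char_poly (\<rho> R_mat)) \<le> d"
proof (rule ccontr)
  have S: "\<rho> S_mat \<in> carrier_mat d d" and R: "\<rho> R_mat \<in> carrier_mat d d" using is_rep_\<rho> by auto
  have "kernel_dim (char_matrix (\<rho> S_mat) x) = Polynomial.order x (char_poly (\<rho> S_mat))"
    using char_matrix_semisimple_of_pow_eq_scalar[OF S rep_S_pow _ \<open>x \<noteq> 0\<close>]
    by (intro kernel_dim_char_matrix_eq_order[OF S]) auto
  moreover have "kernel_dim (char_matrix (\<rho> R_mat) y) = Polynomial.order y (char_poly (\<rho> R_mat))"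
    using char_matrix_semisimple_of_pow_eq_scalar[OF R rep_R_pow _ \<open>y \<noteq> 0\<close>]
    by (intro kernel_dim_char_matrix_eq_order[OF R]) auto
  moreover assume "\<not> ?thesis"
  ultimately obtain v where v: "v \<in> carrier_vec d" "v \<noteq> 0\<^sub>v d"
    and "char_matrix (\<rho> S_mat) x *\<^sub>v v = 0\<^sub>v d" "char_matrix (\<rho> R_mat) y *\<^sub>v v = 0\<^sub>v d"
    using kernels_intersect[of "char_matrix (\<rho> S_mat) x" d d "char_matrix (\<rho> R_mat) y" d] S R
    by auto
  then have "eigenvector (\<rho> S_mat) v x" "eigenvector (\<rho> R_mat) v y"
    using S R by (simp_all add: eigenvector_char_matrix)
  then show False
    using no_common_eigenvector[OF irr \<open>2 \<le> d\<close> v] by (auto simp: eigenvector_def)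
qed

private lemma \<epsilon>_nonzero: "\<epsilon> \<noteq> 0"
  using \<epsilon> by auto

private lemma distinct_roots:
  "csqrt \<epsilon> \<noteq> 0" "csqrt \<epsilon> \<noteq> - csqrt \<epsilon>"
  "\<epsilon> \<noteq> \<epsilon> * omega" "\<epsilon> \<noteq> \<epsilon> * omega\<^sup>2" "\<epsilon> * omega \<noteq> \<epsilon> * omega\<^sup>2"
proof -
  show "csqrt \<epsilon> \<noteq> 0" using \<epsilon>_nonzero by simp
  then show "csqrt \<epsilon> \<noteq> - csqrt \<epsilon>" by (simp add: eq_neg_iff_add_eq_0)
  show "\<epsilon> \<noteq> \<epsilon> * omega" "\<epsilon> \<noteq> \<epsilon> * omega\<^sup>2" using \<epsilon>_nonzero omega_props by auto
  have "omega \<noteq> omega\<^sup>2" using omega_props by (auto simp: power2_eq_square)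
  then show "\<epsilon> * omega \<noteq> \<epsilon> * omega\<^sup>2" using \<epsilon>_nonzero by simp
qed

lemma eigenvalue_rep_S: "eigenvalue (\<rho> S_mat) a \<Longrightarrow> a \<in> {csqrt \<epsilon>, - csqrt \<epsilon>}"
proof -
  assume "eigenvalue (\<rho> S_mat) a"
  then have "a\<^sup>2 = (csqrt \<epsilon>)\<^sup>2" using eigenvalue_pow_eq[OF _ _ rep_S_pow] is_rep_\<rho> by simp
  then show ?thesis unfolding power2_eq_iff by simp
qed

lemma eigenvalue_rep_R: "eigenvalue (\<rho> R_mat) a \<Longrightarrow> a \<in> {\<epsilon>, \<epsilon> * omega, \<epsilon> * omega\<^sup>2}"
proof -
  assume "eigenvalue (\<rho> R_mat) a"
  then have "a ^ 3 = \<epsilon> ^ 3"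
    using eigenvalue_pow_eq[OF _ _ rep_R_pow] is_rep_\<rho> \<epsilon> by (simp add: power3_eq_cube power2_eq_square)
  then show ?thesis using cube_root_cases by simp
qed

lemma sum_order_char_poly_rep_S:
  "Polynomial.order (csqrt \<epsilon>) (char_poly (\<rho> S_mat)) + Polynomial.order (- csqrt \<epsilon>) (char_poly (\<rho> S_mat)) = d"
  using sum_order_char_poly[where M = "\<rho> S_mat" and n = d and V = "{csqrt \<epsilon>, - csqrt \<epsilon>}"]
    eigenvalue_rep_S is_rep_\<rho> distinct_roots
  by simp

lemma sum_order_char_poly_rep_R:
  "Polynomial.order \<epsilon> (char_poly (\<rho> R_mat)) + Polynomial.order (\<epsilon> * omega) (char_poly (\<rho> R_mat))
     + Polynomial.order (\<epsilon> * omega\<^sup>2) (char_poly (\<rho> R_mat)) = d"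
  using sum_order_char_poly[where M = "\<rho> R_mat" and n = d and V = "{\<epsilon>, \<epsilon> * omega, \<epsilon> * omega\<^sup>2}"]
    eigenvalue_rep_R is_rep_\<rho> distinct_roots
  by (simp add: add.assoc)

lemma det_rep_R_dim3:
  assumes "d = 3"
  shows "det (\<rho> R_mat) = \<epsilon>"
proof -
  let ?o = "\<lambda>y. Polynomial.order y (char_poly (\<rho> R_mat))"
  have "?o y \<le> 1" if "y \<noteq> 0" for y
    using order_char_poly_rep_S_R_le[of "csqrt \<epsilon>" y] order_char_poly_rep_S_R_le[of "- csqrt \<epsilon>" y]
      sum_order_char_poly_rep_S distinct_roots that assms by simp
  then have "?o \<epsilon> \<le> 1" "?o (\<epsilon> * omega) \<le> 1" "?o (\<epsilon> * omega\<^sup>2) \<le> 1"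
    using \<epsilon>_nonzero omega_props(4) by simp_all
  then have "?o \<epsilon> = 1" "?o (\<epsilon> * omega) = 1" "?o (\<epsilon> * omega\<^sup>2) = 1"
    using sum_order_char_poly_rep_R assms by linarith+
  then have "det (\<rho> R_mat) = \<epsilon> * (\<epsilon> * omega) * (\<epsilon> * omega\<^sup>2)"
    using det_eq_prod_order_char_poly[where M = "\<rho> R_mat" and n = d and V = "{\<epsilon>, \<epsilon> * omega, \<epsilon> * omega\<^sup>2}"]
      eigenvalue_rep_R is_rep_\<rho> distinct_roots by simp
  also have "\<dots> = \<epsilon> * \<epsilon>\<^sup>2 * omega ^ 3" by (simp add: power2_eq_square power3_eq_cube)
  finally show ?thesis using \<epsilon> omega_props(1) by simp
qed

lemma det_rep_S_dim4:
  assumes "d = 4"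
  shows "det (\<rho> S_mat) = 1"
proof -
  let ?o = "\<lambda>x. Polynomial.order x (char_poly (\<rho> S_mat))"
  have "?o x \<le> 2" if "x \<noteq> 0" for x
    using order_char_poly_rep_S_R_le[of x \<epsilon>] order_char_poly_rep_S_R_le[of x "\<epsilon> * omega"]
      order_char_poly_rep_S_R_le[of x "\<epsilon> * omega\<^sup>2"]
      sum_order_char_poly_rep_R \<epsilon>_nonzero omega_props(4) that assms by simp
  then have "?o (csqrt \<epsilon>) \<le> 2" "?o (- csqrt \<epsilon>) \<le> 2"
    using distinct_roots by simp_all
  then have "?o (csqrt \<epsilon>) = 2" "?o (- csqrt \<epsilon>) = 2"
    using sum_order_char_poly_rep_S assms by linarith+
  then have "det (\<rho> S_mat) = (csqrt \<epsilon>)\<^sup>2 * (- csqrt \<epsilon>)\<^sup>2"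
    using det_eq_prod_order_char_poly[where M = "\<rho> S_mat" and n = d and V = "{csqrt \<epsilon>, - csqrt \<epsilon>}"]
      eigenvalue_rep_S is_rep_\<rho> distinct_roots by simp
  also have "\<dots> = \<epsilon>\<^sup>2" unfolding power2_minus power2_csqrt by (simp add: power2_eq_square)
  finally show ?thesis using \<epsilon> by simp
qed

end

lemma det_rep_T_pow:
  assumes irr: "irreducible_rep d \<rho>" and "d \<le> 4"
  shows "det (\<rho> T_mat) ^ (12 div d) = 1"
proof -
  have rep: "is_rep d \<rho>" and "0 < d" using irr by (auto simp: irreducible_rep_def)
  obtain \<epsilon> where \<epsilon>: "\<epsilon>\<^sup>2 = 1" and minus_one: "\<rho> minus_one_mat = \<epsilon> \<cdot>\<^sub>m 1\<^sub>m d"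
    using rep_minus_one_mat[OF irr] by blast
  have S: "\<rho> S_mat \<in> carrier_mat d d" and R: "\<rho> R_mat \<in> carrier_mat d d" using rep by auto
  have S2: "det (\<rho> S_mat) ^ 2 = \<epsilon> ^ d"
    using det_pow_mat[OF S, of 2] rep_S_pow[OF irr \<epsilon> minus_one] by simp
  have R3: "det (\<rho> R_mat) ^ 3 = \<epsilon> ^ d"
    using det_pow_mat[OF R, of 3] rep_R_pow[OF irr \<epsilon> minus_one] by simp
  have T: "det (\<rho> T_mat) = det (\<rho> S_mat) ^ 3 * det (\<rho> R_mat)"
    using rep_T_mat[OF irr \<epsilon> minus_one] S R by (simp add: det_mult[of _ d] power3_eq_cube)
  have even: "\<epsilon> ^ (2 * k) = 1" for k using \<epsilon> by (simp add: power_mult)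
  have "d = 1 \<or> d = 2 \<or> d = 3 \<or> d = 4" using \<open>0 < d\<close> \<open>d \<le> 4\<close> by auto
  then show ?thesis
  proof (elim disjE)
    assume "d = 1"
    have "det (\<rho> T_mat) ^ 12 = (det (\<rho> S_mat) ^ 2) ^ 18 * (det (\<rho> R_mat) ^ 3) ^ 4"
      unfolding T by (simp add: power_mult_distrib flip: power_mult)
    also have "\<dots> = \<epsilon> ^ (2 * 11)" using S2 R3 \<open>d = 1\<close> by (simp flip: power_add)
    finally show ?thesis using even[of 11] \<open>d = 1\<close> by simp
  next
    assume "d = 2"
    have "det (\<rho> T_mat) ^ 6 = (det (\<rho> S_mat) ^ 2) ^ 9 * (det (\<rho> R_mat) ^ 3) ^ 2"
      unfolding T by (simp add: power_mult_distrib flip: power_mult)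
    also have "\<dots> = \<epsilon> ^ (2 * 11)" using S2 R3 \<open>d = 2\<close> by (simp flip: power_add power_mult)
    finally show ?thesis using even[of 11] \<open>d = 2\<close> by simp
  next
    assume "d = 3"
    have "det (\<rho> T_mat) ^ 4 = (det (\<rho> S_mat) ^ 2) ^ 6 * \<epsilon> ^ 4"
      unfolding T det_rep_R_dim3[OF irr \<epsilon> minus_one \<open>d = 3\<close>]
      by (simp add: power_mult_distrib flip: power_mult)
    also have "\<dots> = \<epsilon> ^ (2 * 11)" using S2 \<open>d = 3\<close> by (simp flip: power_add power_mult)
    finally show ?thesis using even[of 11] \<open>d = 3\<close> by simp
  next
    assume "d = 4"
    have "det (\<rho> T_mat) ^ 3 = det (\<rho> R_mat) ^ 3"
      unfolding T det_rep_S_dim4[OF irr \<epsilon> minus_one \<open>d = 4\<close>] by simp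
    also have "\<dots> = \<epsilon> ^ (2 * 2)" using R3 \<open>d = 4\<close> by simp
    finally show ?thesis using even[of 2] \<open>d = 4\<close> by simp
  qed
qed

theorem lemma4p1:
  fixes d :: nat and \<rho> :: "int mat \<Rightarrow> complex mat" and r :: "nat \<Rightarrow> real"
  assumes "irreducible_rep d \<rho>"
    and "d \<le> 4"
    and "char_poly (\<rho> T_mat) = (\<Prod>i<d. [:- e (r i), 1:])"
  shows "\<exists>n::int. 12 * (\<Sum>i<d. r i) = of_int n \<and> int d dvd n"
proof -
  have T: "\<rho> T_mat \<in> carrier_mat d d" and "0 < d"
    using assms(1) by (auto simp: irreducible_rep_def is_rep_def)
  have "det (\<rho> T_mat) = (-1) ^ d * (\<Prod>i<d. (-1) * e (r i))"
    using det_eq_poly_char_poly_0[OF T] by (simp add: assms(3) poly_prod)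
  also have "\<dots> = e (\<Sum>i<d. r i)"
    by (simp only: prod.distrib prod_constant card_lessThan e_sum mult.assoc flip: power_mult_distrib) simp
  finally have "e (real (12 div d) * (\<Sum>i<d. r i)) = 1"
    using det_rep_T_pow[OF assms(1,2)] by (simp add: e_pow)
  then obtain n :: int where n: "real (12 div d) * (\<Sum>i<d. r i) = of_int n"
    by (rule e_eq_1_imp_int)
  have "d = 1 \<or> d = 2 \<or> d = 3 \<or> d = 4" using \<open>0 < d\<close> \<open>d \<le> 4\<close> by auto
  then have "real d * real (12 div d) = 12" by auto
  then have "12 * (\<Sum>i<d. r i) = real d * (real (12 div d) * (\<Sum>i<d. r i))"
    by (simp flip: mult.assoc)
  also have "\<dots> = of_int (int d * n)" using n by simp
  finally have "12 * (\<Sum>i<d. r i) = of_int (int d * n)" .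
  then show ?thesis by (intro exI[of _ "int d * n"]) simp
qed

end
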